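(* Let $(t_n(x))_{n\ge0}$ be the generalized Gončarov basis associated with $(\mathfrak d,\mathcal Z)$, where $\mathfrak d$ is a delta operator and $\mathcal Z=(z_i)_{i\ge0}$ a grid. Then $(t_n)$ is of binomial type if and only if $\mathcal Z$ is an arithmetic progression with initial term $0$, i.e. there is $b\in\mathbb K$ with $z_i=ib$ for all $i\ge0$.
   Context: $\mathbb K$ is a field of characteristic zero; a delta operator is a linear operator $\mathfrak d$ on $\mathbb K[x]$ commuting with all shifts $E_a:f(x)\mapsto f(x+a)$ and with $\mathfrak d(x)$ a nonzero constant. $\varepsilon_z$ is evaluation at $z$. The generalized Gončarov basis associated with $(\mathfrak d,\mathcal Z)$ is the unique sequence $(t_n)_{n\ge0}$ with $\deg t_n=n$ and $\varepsilon_{z_i}(\mathfrak d^{\,i}(t_n))=n!\,\delta_{i,n}$ for all $i,n$. A sequence $(t_n)$ with $\deg t_n=n$ is of binomial type if $t_n(x+y)=\sum_{k=0}^n\binom nk t_k(x)t_{n-k}(y)$ for all $n$. *)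

theory Defs
  imports "HOL-Computational_Algebra.Polynomial"
begin

definition shift_op :: "'a::comm_ring_1 \<Rightarrow> 'a poly \<Rightarrow> 'a poly" where
  "shift_op a p = pcompose p [:a, 1:]"

definition delta_operator :: "('a::field poly \<Rightarrow> 'a poly) \<Rightarrow> bool" where
  "delta_operator d \<longleftrightarrow>
     (\<forall>p q. d (p + q) = d p + d q) \<and>
     (\<forall>c p. d (smult c p) = smult c (d p)) \<and>
     (\<forall>a p. d (shift_op a p) = shift_op a (d p)) \<and>
     (\<exists>c. c \<noteq> 0 \<and> d [:0, 1:] = [:c:])"

definition goncarov_basis ::
  "('a::field_char_0 poly \<Rightarrow> 'a poly) \<Rightarrow> (nat \<Rightarrow> 'a) \<Rightarrow> (nat \<Rightarrow> 'a poly) \<Rightarrow> bool" where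
  "goncarov_basis d Z t \<longleftrightarrow>
     (\<forall>n. degree (t n) = n) \<and>
     (\<forall>i n. poly ((d ^^ i) (t n)) (Z i) = (if i = n then fact n else 0))"

definition binomial_type :: "(nat \<Rightarrow> 'a::comm_ring_1 poly) \<Rightarrow> bool" where
  "binomial_type t \<longleftrightarrow>
     (\<forall>n. degree (t n) = n) \<and>
     (\<forall>n x y. poly (t n) (x + y) =
        (\<Sum>k\<le>n. of_nat (n choose k) * poly (t k) x * poly (t (n - k)) y))"

end

theory Submission
  imports Defs
begin

text \<open>A polynomial is determined by its Gon\v{c}arov data \<open>(\<epsilon>\<^sub>z\<^sub>i(d\<^sup>i p))\<^sub>i\<close>. Comparing the data of
  both sides of \<open>E\<^sub>y t\<^sub>n = \<Sum>\<^sub>k C(n,k) t\<^sub>n\<^sub>-\<^sub>k(y) t\<^sub>k\<close>, binomiality means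
  \<open>(d\<^sup>i t\<^sub>n)(y + z\<^sub>i) = C(n,i) i! t\<^sub>n\<^sub>-\<^sub>i(y)\<close> for all \<open>n, i, y\<close>. For \<open>i = 1\<close> this is the recurrence
  \<open>d t\<^sub>n\<^sub>+\<^sub>1 = (n + 1) E\<^sub>-\<^sub>b t\<^sub>n\<close> with \<open>b = z\<^sub>1\<close>, whence \<open>d\<^sup>i t\<^sub>n = n!/(n-i)! E\<^sub>-\<^sub>i\<^sub>b t\<^sub>n\<^sub>-\<^sub>i\<close>, and the case
  \<open>n = i + 1\<close> then says that the affine \<open>t\<^sub>1\<close> takes the same value at \<open>0\<close> and at \<open>z\<^sub>i - i b\<close>.
  Conversely, if \<open>z\<^sub>i = i b\<close> then \<open>b + z\<^sub>i = z\<^sub>i\<^sub>+\<^sub>1\<close>, so \<open>E\<^sub>b d t\<^sub>n\<^sub>+\<^sub>1\<close> has the Gon\v{c}arov data of \<open>(n + 1) t\<^sub>n\<close>;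
  this gives the recurrence, and the resulting formula for \<open>d\<^sup>i t\<^sub>n\<close> is binomiality.\<close>

lemma poly_shift_op [simp]: "poly (shift_op a p) x = poly p (a + x)"
  by (simp add: shift_op_def poly_pcompose)

lemma shift_op_0_left [simp]: "shift_op 0 p = p"
  by (simp add: shift_op_def)

lemma shift_op_0_right [simp]: "shift_op a 0 = 0"
  by (simp add: shift_op_def)

lemma shift_op_smult [simp]: "shift_op a (smult c p) = smult c (shift_op a p)"
  by (simp add: shift_op_def pcompose_smult)

lemma shift_op_shift_op [simp]: "shift_op a (shift_op b p) = shift_op (b + a) p"
  by (simp add: shift_op_def pcompose_assoc[symmetric] pcompose_pCons)

lemma poly_inj_of_degree_one:
  fixes p :: "'a::idom poly"
  assumes "degree p = 1" "poly p x = poly p y"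
  shows "x = y"
proof -
  have "poly p z = coeff p 0 + coeff p 1 * z" for z
    using assms(1) by (simp add: poly_altdef)
  moreover have "coeff p 1 \<noteq> 0"
    using assms(1) by (metis leading_coeff_0_iff one_neq_zero degree_0)
  ultimately show ?thesis using assms(2) by simp
qed

lemma expansion_in_graded_basis:
  fixes t :: "nat \<Rightarrow> 'a::field poly"
  assumes deg: "\<And>k. degree (t k) = k" and nz: "\<And>k. t k \<noteq> 0"
  shows "degree p \<le> m \<Longrightarrow> \<exists>c. p = (\<Sum>k\<le>m. smult (c k) (t k))"
proof (induction m arbitrary: p)
  case 0
  then obtain a b where "p = [:a:]" "t 0 = [:b:]" "b \<noteq> 0"
    using deg[of 0] nz[of 0] by (metis degree_0_id le_zero_eq pCons_0_0)
  then have "p = smult (a / b) (t 0)" by simp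
  then show ?case by (intro exI[of _ "\<lambda>_. a / b"]) simp
next
  case (Suc m)
  define a where "a = coeff p (Suc m) / lead_coeff (t (Suc m))"
  have lc: "coeff (t (Suc m)) (Suc m) \<noteq> 0"
    using deg[of "Suc m"] nz[of "Suc m"] by (metis leading_coeff_0_iff)
  have "degree (p - smult a (t (Suc m))) \<le> m"
  proof (rule degree_le, intro allI impI)
    fix i assume "m < i"
    then consider "i = Suc m" | "Suc m < i" by linarith
    then show "coeff (p - smult a (t (Suc m))) i = 0"
      using Suc.prems deg[of "Suc m"] lc
      by cases (simp_all add: a_def coeff_eq_0)
  qed
  then obtain c where c: "p - smult a (t (Suc m)) = (\<Sum>k\<le>m. smult (c k) (t k))"
    using Suc.IH by blast
  have "p = (\<Sum>k\<le>Suc m. smult ((c(Suc m := a)) k) (t k))"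
    using c by (simp add: algebra_simps)
  then show ?case by blast
qed

locale delta_op =
  fixes d :: "'a::field poly \<Rightarrow> 'a poly"
  assumes delta: "delta_operator d"
begin

lemma add: "d (p + q) = d p + d q"
  using delta by (simp add: delta_operator_def)

lemma smult: "d (smult c p) = smult c (d p)"
  using delta by (simp add: delta_operator_def)

lemma shift: "d (shift_op a p) = shift_op a (d p)"
  using delta by (simp add: delta_operator_def)

lemma diff: "d (p - q) = d p - d q"
  using add[of "p - q" q] by simp

lemma zero: "d 0 = 0"
  using diff[of 0 0] by simp

lemma iterate_add: "(d ^^ i) (p + q) = (d ^^ i) p + (d ^^ i) q"
  by (induction i) (simp_all add: add)

lemma iterate_smult: "(d ^^ i) (smult c p) = smult c ((d ^^ i) p)"
  by (induction i) (simp_all add: smult)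

lemma iterate_shift: "(d ^^ i) (shift_op a p) = shift_op a ((d ^^ i) p)"
  by (induction i) (simp_all add: shift)

lemma iterate_zero: "(d ^^ i) 0 = 0"
  by (induction i) (simp_all add: zero)

lemma iterate_diff: "(d ^^ i) (p - q) = (d ^^ i) p - (d ^^ i) q"
  by (induction i) (simp_all add: diff)

lemma iterate_sum: "(d ^^ i) (sum f A) = (\<Sum>k\<in>A. (d ^^ i) (f k))"
  by (induction A rule: infinite_finite_induct) (simp_all add: iterate_zero iterate_add)

text \<open>Shifting \<open>x\<close> by one adds the constant \<open>1\<close>, while \<open>d x\<close> is a constant and hence shift-invariant.\<close>
lemma one: "d 1 = 0"
proof -
  obtain c where c: "d [:0, 1:] = [:c:]"
    using delta by (auto simp: delta_operator_def)
  have "shift_op 1 [:0, 1:] = [:0, 1:] + (1 :: 'a poly)"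
    by (simp add: shift_op_def pcompose_pCons one_pCons)
  then have "d [:0, 1:] + d 1 = shift_op 1 (d [:0, 1:])"
    by (metis add shift)
  also have "\<dots> = d [:0, 1:]"
    using c by (simp add: shift_op_def)
  finally show ?thesis by simp
qed

lemma const: "d [:a:] = 0"
  using smult[of a 1] by (simp add: one)

end

locale goncarov = delta_op d for d :: "'a::field_char_0 poly \<Rightarrow> 'a poly" +
  fixes Z :: "nat \<Rightarrow> 'a" and t :: "nat \<Rightarrow> 'a poly"
  assumes basis: "goncarov_basis d Z t"
begin

lemma degree_t: "degree (t n) = n"
  using basis by (simp add: goncarov_basis_def)

lemma functional_t: "poly ((d ^^ i) (t n)) (Z i) = (if i = n then fact n else 0)"
  using basis by (simp add: goncarov_basis_def)

lemma t_nonzero: "t n \<noteq> 0"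
  using functional_t[of n n] by (auto simp: iterate_zero)

lemma functional_expansion:
  "poly ((d ^^ i) (\<Sum>k\<le>m. smult (c k) (t k))) (Z i) = (if i \<le> m then c i * fact i else 0)"
proof -
  have "poly ((d ^^ i) (\<Sum>k\<le>m. smult (c k) (t k))) (Z i)
      = (\<Sum>k\<le>m. c k * (if i = k then fact k else 0))"
    by (simp add: iterate_sum iterate_smult poly_sum functional_t)
  also have "\<dots> = (\<Sum>k\<le>m. if i = k then c i * fact i else 0)"
    by (rule sum.cong) auto
  finally show ?thesis by simp
qed

lemma eq_iff_functionals_eq:
  "p = q \<longleftrightarrow> (\<forall>i. poly ((d ^^ i) p) (Z i) = poly ((d ^^ i) q) (Z i))"
proof (intro iffI allI)
  assume eq: "\<forall>i. poly ((d ^^ i) p) (Z i) = poly ((d ^^ i) q) (Z i)"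
  obtain c where c: "p - q = (\<Sum>k\<le>degree (p - q). smult (c k) (t k))"
    using expansion_in_graded_basis[OF degree_t t_nonzero] by blast
  have "c i = 0" if "i \<le> degree (p - q)" for i
    using eq functional_expansion[where i = i and m = "degree (p - q)" and c = c] that
    by (simp add: c[symmetric] iterate_diff)
  then show "p = q"
    using c by simp
qed simp

lemma binomial_identity_iff:
  "(\<forall>x. poly (t n) (x + y) = (\<Sum>k\<le>n. of_nat (n choose k) * poly (t k) x * poly (t (n - k)) y))
   \<longleftrightarrow> (\<forall>i. poly ((d ^^ i) (t n)) (y + Z i)
          = (if i \<le> n then of_nat (n choose i) * poly (t (n - i)) y * fact i else 0))"
proof -
  define r where "r = (\<Sum>k\<le>n. smult (of_nat (n choose k) * poly (t (n - k)) y) (t k))"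
  have "(\<forall>x. poly (t n) (x + y) = (\<Sum>k\<le>n. of_nat (n choose k) * poly (t k) x * poly (t (n - k)) y))
        \<longleftrightarrow> shift_op y (t n) = r"
    by (simp add: r_def poly_eq_poly_eq_iff[symmetric] fun_eq_iff poly_sum add.commute mult_ac)
  also have "\<dots> \<longleftrightarrow> (\<forall>i. poly ((d ^^ i) (t n)) (y + Z i)
          = (if i \<le> n then of_nat (n choose i) * poly (t (n - i)) y * fact i else 0))"
    by (simp add: eq_iff_functionals_eq iterate_shift r_def functional_expansion)
  finally show ?thesis .
qed

lemma binomial_type_iff:
  "binomial_type t \<longleftrightarrow> (\<forall>n y i. poly ((d ^^ i) (t n)) (y + Z i)
          = (if i \<le> n then of_nat (n choose i) * poly (t (n - i)) y * fact i else 0))"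
  unfolding binomial_type_def using binomial_identity_iff degree_t by blast

lemma iterate_of_shift_recurrence:
  assumes rec: "\<And>n. d (t (Suc n)) = smult (of_nat (Suc n)) (shift_op (- b) (t n))"
    and "i \<le> n"
  shows "(d ^^ i) (t n) = smult (fact n / fact (n - i)) (shift_op (- (of_nat i * b)) (t (n - i)))"
  using \<open>i \<le> n\<close>
proof (induction i)
  case (Suc i)
  then obtain m where m: "n - i = Suc m" "n - Suc i = m"
    by (metis Suc_diff_Suc Suc_le_lessD)
  have "(d ^^ Suc i) (t n) = smult (fact n / fact (Suc m) * of_nat (Suc m))
          (shift_op (- b - of_nat i * b) (t m))"
    using Suc by (simp add: m smult shift rec)
  also have "fact n / fact (Suc m) * of_nat (Suc m) = (fact n / fact m :: 'a)"
    by (simp add: fact_Suc field_simps del: of_nat_Suc)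
  also have "- b - of_nat i * b = - (of_nat (Suc i) * b)"
    by (simp add: algebra_simps)
  finally show ?case by (simp add: m)
qed simp

lemma binomial_type_imp_arithmetic_grid:
  assumes "binomial_type t"
  shows "Z i = of_nat i * Z 1"
proof -
  note functional = assms[unfolded binomial_type_iff, rule_format]
  have rec: "d (t (Suc n)) = smult (of_nat (Suc n)) (shift_op (- Z 1) (t n))" for n
  proof -
    have "poly (d (t (Suc n))) x = of_nat (Suc n) * poly (t n) (x - Z 1)" for x
      using functional[of 1 "Suc n" "x - Z 1"] by simp
    then show ?thesis
      by (simp add: poly_eq_poly_eq_iff[symmetric] fun_eq_iff)
  qed
  have "poly ((d ^^ i) (t (Suc i))) (Z i) = of_nat (Suc i) * poly (t 1) 0 * fact i"
    using functional[of i "Suc i" 0] by simp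
  then have "fact (Suc i) * poly (t 1) (Z i - of_nat i * Z 1) = fact (Suc i) * poly (t 1) 0"
    by (simp add: iterate_of_shift_recurrence[OF rec] algebra_simps fact_Suc)
  then have "poly (t 1) (Z i - of_nat i * Z 1) = poly (t 1) 0"
    by (metis fact_nonzero mult_cancel_left)
  then show ?thesis
    using poly_inj_of_degree_one[OF degree_t] by fastforce
qed

lemma arithmetic_grid_imp_shift_recurrence:
  assumes grid: "\<And>i. Z i = of_nat i * b"
  shows "d (t (Suc n)) = smult (of_nat (Suc n)) (shift_op (- b) (t n))"
proof -
  have "shift_op b (d (t (Suc n))) = smult (of_nat (Suc n)) (t n)"
    unfolding eq_iff_functionals_eq
  proof
    fix i
    have "b + Z i = Z (Suc i)"
      using grid by (simp add: algebra_simps)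
    moreover have "(d ^^ i) (d (t (Suc n))) = (d ^^ Suc i) (t (Suc n))"
      by (simp only: funpow_Suc_right o_apply)
    ultimately show "poly ((d ^^ i) (shift_op b (d (t (Suc n))))) (Z i)
             = poly ((d ^^ i) (smult (of_nat (Suc n)) (t n))) (Z i)"
      by (simp add: iterate_shift iterate_smult functional_t del: funpow.simps)
  qed
  then have "shift_op (- b) (shift_op b (d (t (Suc n))))
           = shift_op (- b) (smult (of_nat (Suc n)) (t n))"
    by simp
  then show ?thesis by simp
qed

lemma arithmetic_grid_imp_binomial_type:
  assumes grid: "\<And>i. Z i = of_nat i * b"
  shows "binomial_type t"
  unfolding binomial_type_iff
proof (intro allI)
  note iterate = iterate_of_shift_recurrence[OF arithmetic_grid_imp_shift_recurrence[OF grid]]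
  fix n y i
  show "poly ((d ^^ i) (t n)) (y + Z i)
      = (if i \<le> n then of_nat (n choose i) * poly (t (n - i)) y * fact i else 0)"
  proof (cases "i \<le> n")
    case True
    have "fact n / fact (n - i) = (of_nat (n choose i) * fact i :: 'a)"
      using True by (simp add: binomial_fact)
    then show ?thesis
      using True by (simp add: iterate grid mult_ac)
  next
    case False
    have "d (t 0) = 0"
      using degree_t[of 0] const by (metis degree_0_id)
    then have "(d ^^ Suc n) (t n) = 0"
      by (simp add: iterate smult shift)
    moreover have "i = (i - Suc n) + Suc n"
      using False by simp
    ultimately have "(d ^^ i) (t n) = 0"
      by (metis funpow_add o_apply iterate_zero)
    then show ?thesis
      using False by simp
  qed
qed

end

theorem mainTheorem14:
  fixes d :: "'a::field_char_0 poly \<Rightarrow> 'a poly"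
    and Z :: "nat \<Rightarrow> 'a"
    and t :: "nat \<Rightarrow> 'a poly"
  assumes "delta_operator d"
    and "goncarov_basis d Z t"
  shows "binomial_type t \<longleftrightarrow> (\<exists>b. \<forall>i. Z i = of_nat i * b)"
proof -
  interpret goncarov d Z t
    using assms by unfold_locales
  show ?thesis
    using binomial_type_imp_arithmetic_grid arithmetic_grid_imp_binomial_type by blast
qed

end
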